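(* Let $\mathbf{E},\mathbf{F}$ be finite-dimensional Euclidean spaces, $\mathcal{K}\subset\mathbf{E}$ a proper cone, $\mathcal{A}:\mathbf{E}\to\mathbf{F}$ a surjective linear map, $b\in\mathbf{F}$, $c\in\mathbf{E}$, and consider the conic program (P) $\min\{\langle c,x\rangle:\mathcal{A}x=b,\ x\in\mathcal{K}\}$ with optimal value $p_\star$ and solution set $\mathcal{X}_\star$. Suppose primal and dual Slater's condition holds: there are $x_0\in\mathrm{int}(\mathcal{K})$ with $\mathcal{A}x_0=b$ and $y_0\in\mathbf{F}$ with $c-\mathcal{A}^*y_0\in\mathrm{int}(\mathcal{K}^* )$. For a perturbation $\Delta=(\Delta\mathcal{A},\Delta b,\Delta c)$ let (P') be $\min\{\langle c+\Delta c,x\rangle:(\mathcal{A}+\Delta\mathcal{A})x=b+\Delta b,\ x\in\mathcal{K}\}$ with solution set $\mathcal{X}_\star'$, and $\|\Delta\|=\|\Delta\mathcal{A}\|_{\mathrm{op}}+\|\Delta b\|_2+\|\Delta c\|_2$. Then for every sufficiently small $\varepsilon>0$ there is a constant $\bar c$ such that for all $\Delta$ with $\|\Delta\|\le\varepsilon$ and every optimal solution $x_\star'$ of (P'), $$\max\{\epsilon_{\mathrm{opt}}(x_\star'),\ \|\mathcal{A}(x_\star')-b\|_2\}\le\bar c\|\Delta\|.$$ Consequently, if there are constants $c_1,c_2,c_3\ge0$ and $p>0$ such that $\mathrm{dist}(x,\mathcal{X}_\star)^p\le c_1|\epsilon_{\mathrm{opt}}(x)|+c_2\|\mathcal{A}x-b\|_2+c_3\|x_-\|_2$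 for all $x\in\mathbf{E}$, then there are constants $c_1',c_2',c_3'\ge0$ such that for all such $\Delta$, $\mathrm{dist}(\mathcal{X}_\star,\mathcal{X}_\star')^{p}\le c_1'\|\Delta c\|_2+c_2'\|\Delta\mathcal{A}\|_{\mathrm{op}}+c_3'\|\Delta b\|_2$.
   Context: $\mathcal{K}^*$ is the dual cone of $\mathcal{K}$. $\epsilon_{\mathrm{opt}}(x)=\langle c,x\rangle-p_\star$ is suboptimality with respect to the original (unperturbed) data. $x_-=x-P_{\mathcal{K}}(x)$ with $P_{\mathcal{K}}$ the Euclidean projection onto $\mathcal{K}$. $\mathrm{dist}(x,\mathcal{X}_\star)=\inf_{z\in\mathcal{X}_\star}\|x-z\|_2$ and $\mathrm{dist}(\mathcal{X}_\star,\mathcal{X}_\star')=\inf_{x\in\mathcal{X}_\star,x'\in\mathcal{X}_\star'}\|x-x'\|_2$. $\|\cdot\|_{\mathrm{op}}$ is the operator norm of a linear map. *)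

theory Defs
  imports "HOL-Analysis.Analysis"
begin

definition proper_cone :: "'a::euclidean_space set \<Rightarrow> bool" where
  "proper_cone K \<longleftrightarrow> convex_cone K \<and> closed K \<and> interior K \<noteq> {} \<and>
     (\<forall>x. x \<in> K \<and> -x \<in> K \<longrightarrow> x = 0)"

definition dual_cone :: "'a::real_inner set \<Rightarrow> 'a set" where
  "dual_cone K = {y. \<forall>x\<in>K. 0 \<le> inner x y}"

definition feasible_set :: "('e::real_inner \<Rightarrow> 'f) \<Rightarrow> 'f \<Rightarrow> 'e set \<Rightarrow> 'e set" where
  "feasible_set A b K = {x. A x = b \<and> x \<in> K}"

definition opt_val :: "('e::real_inner \<Rightarrow> 'f) \<Rightarrow> 'f \<Rightarrow> 'e \<Rightarrow> 'e set \<Rightarrow> real" where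
  "opt_val A b c K = (INF x\<in>feasible_set A b K. inner c x)"

definition sol_set :: "('e::real_inner \<Rightarrow> 'f) \<Rightarrow> 'f \<Rightarrow> 'e \<Rightarrow> 'e set \<Rightarrow> 'e set" where
  "sol_set A b c K = {x \<in> feasible_set A b K. \<forall>z \<in> feasible_set A b K. inner c x \<le> inner c z}"

end

theory Submission
  imports Defs
begin

text \<open>Dual Slater makes the objective coercive on \<open>K\<close>, so all (nearly) optimal points of
  the original and of the slightly perturbed problem stay in one fixed ball. Primal Slater and
  a bounded right inverse of \<open>A\<close> let one move a point of \<open>K\<close> that is feasible for one of the
  two problems to a nearby feasible point of the other: pull it towards the interior point
  \<open>x0\<close>, then correct the residual. Comparing objective values at these nearby points bounds
  the suboptimality and the residual of a perturbed solution linearly in the perturbation;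
  the distance between the solution sets then follows from the assumed error bound applied
  to a perturbed solution, which lies in \<open>K\<close>.\<close>

lemma dual_cone_cball_coercive:
  fixes s :: "'a::real_inner"
  assumes ball: "cball s \<rho> \<subseteq> dual_cone K" and "0 \<le> \<rho>" and x: "x \<in> K"
  shows "\<rho> * norm x \<le> inner s x"
proof (cases "x = 0")
  case False
  define v where "v = s - (\<rho> / norm x) *\<^sub>R x"
  have "v \<in> cball s \<rho>"
    using False \<open>0 \<le> \<rho>\<close> by (simp add: v_def dist_norm)
  then have "0 \<le> inner x v"
    using ball x unfolding dual_cone_def by blast
  also have "inner x v = inner s x - \<rho> * norm x"
    using False by (simp add: v_def inner_diff_right inner_commute dot_square_norm power2_eq_square)
  finally show ?thesis by simp
qed simp

lemma convex_cball_shift_mem: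
  assumes "convex K" and ball: "cball x0 r \<subseteq> K" and "x \<in> K"
    and "0 \<le> t" "t \<le> 1" and d: "norm d \<le> t * r"
  shows "(1 - t) *\<^sub>R x + t *\<^sub>R x0 + d \<in> K"
proof (cases "t = 0")
  case True
  then show ?thesis using \<open>x \<in> K\<close> d by simp
next
  case False
  then have "t > 0" using \<open>0 \<le> t\<close> by simp
  have "x0 + (1 / t) *\<^sub>R d \<in> K"
    using ball d \<open>t > 0\<close> by (auto simp: dist_norm pos_divide_le_eq mult.commute)
  then have "(1 - t) *\<^sub>R x + t *\<^sub>R (x0 + (1 / t) *\<^sub>R d) \<in> K"
    using \<open>convex K\<close> \<open>x \<in> K\<close> \<open>0 \<le> t\<close> \<open>t \<le> 1\<close> by (intro convexD) auto
  then show ?thesis using \<open>t > 0\<close> by (simp add: algebra_simps)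
qed

text \<open>\<open>T = id + dA \<circ> R\<close> moves no vector by more than half its length, so it is
  injective, hence onto, and \<open>T\<^sup>-\<^sup>1\<close> has norm at most 2.\<close>
lemma right_inverse_perturbation_solvable:
  fixes A dA :: "'e::euclidean_space \<Rightarrow> 'f::euclidean_space" and R :: "'f \<Rightarrow> 'e"
  assumes "linear R" and A_R: "\<And>z. A (R z) = z" and R_bound: "\<And>z. norm (R z) \<le> B * norm z"
    and "0 \<le> B" and "linear dA" and small: "onorm dA * B \<le> 1 / 2"
  shows "\<exists>d. A d + dA d = y \<and> norm d \<le> 2 * B * norm y"
proof -
  define T where "T z = z + dA (R z)" for z
  have "linear T"
    unfolding T_def using \<open>linear dA\<close> \<open>linear R\<close>
    by (intro linear_compose_add linear_id[unfolded id_def] linear_compose[of R dA, unfolded o_def])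
  have T_lower: "norm z \<le> 2 * norm (T z)" for z
  proof -
    have "norm (dA (R z)) \<le> onorm dA * norm (R z)"
      using \<open>linear dA\<close> by (simp add: onorm linear_conv_bounded_linear)
    also have "\<dots> \<le> onorm dA * B * norm z"
      using R_bound onorm_pos_le \<open>linear dA\<close>
      by (metis linear_conv_bounded_linear mult.assoc mult_left_mono)
    also have "\<dots> \<le> 1 / 2 * norm z"
      using small by (rule mult_right_mono) simp
    finally show ?thesis
      using norm_triangle_ineq4[of "T z" "dA (R z)"] by (simp add: T_def)
  qed
  have "inj T"
    using T_lower by (metis linear_injective_0[OF \<open>linear T\<close>] mult_zero_right norm_le_zero_iff norm_zero)
  then obtain z where z: "T z = y"
    using linear_inj_imp_surj[OF \<open>linear T\<close>] by (metis surjD)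
  show ?thesis
  proof (intro exI conjI)
    show "A (R z) + dA (R z) = y" using z A_R by (simp add: T_def)
    have "norm (R z) \<le> B * norm z" by (rule R_bound)
    also have "\<dots> \<le> B * (2 * norm y)"
      using T_lower[of z] z \<open>0 \<le> B\<close> by (simp add: mult_left_mono)
    finally show "norm (R z) \<le> 2 * B * norm y" by simp
  qed
qed

text \<open>Move \<open>x\<close> towards the interior point \<open>x0\<close>, then correct the residual;
  the ball around \<open>x0\<close> absorbs the correction.\<close>
lemma feasibility_restoration:
  assumes "convex K" and "cball x0 r \<subseteq> K" and "x \<in> K"
    and "linear T" and solvable: "\<And>y. \<exists>d. T d = y \<and> norm d \<le> \<beta> * norm y"
    and "0 \<le> t" "t \<le> 1"
    and residual: "\<beta> * norm (y - T ((1 - t) *\<^sub>R x + t *\<^sub>R x0)) \<le> t * r"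
  shows "\<exists>z \<in> K. T z = y \<and> norm (z - x) \<le> t * (norm x + norm x0 + r)"
proof -
  define w where "w = (1 - t) *\<^sub>R x + t *\<^sub>R x0"
  obtain d where d: "T d = y - T w" and "norm d \<le> \<beta> * norm (y - T w)"
    using solvable by blast
  with residual have nd: "norm d \<le> t * r" by (simp add: w_def)
  show ?thesis
  proof (intro bexI conjI)
    show "w + d \<in> K"
      unfolding w_def using convex_cball_shift_mem assms nd by blast
    show "T (w + d) = y"
      using d linear_add[OF \<open>linear T\<close>] by simp
    have "norm (w + d - x) = norm ((t *\<^sub>R x0 - t *\<^sub>R x) + d)"
      by (simp add: w_def algebra_simps)
    also have "\<dots> \<le> norm (t *\<^sub>R x0 - t *\<^sub>R x) + norm d"
      by (rule norm_triangle_ineq)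
    also have "\<dots> \<le> t * norm x0 + t * norm x + t * r"
      using nd \<open>0 \<le> t\<close> norm_triangle_ineq4[of "t *\<^sub>R x0" "t *\<^sub>R x"] by simp
    finally show "norm (w + d - x) \<le> t * (norm x + norm x0 + r)"
      by (simp add: algebra_simps)
  qed
qed

lemma error_bound_transfer:
  assumes "0 < q" "0 \<le> c1" "0 \<le> c2" "0 \<le> e" "S' \<subseteq> K"
    and error_bound: "\<forall>x. infdist x S powr q
      \<le> c1 * \<bar>f x\<bar> + c2 * norm (g x) + c3 * norm (x - closest_point K x)"
    and small: "\<And>x'. x' \<in> S' \<Longrightarrow> \<bar>f x'\<bar> \<le> e \<and> norm (g x') \<le> e"
  shows "setdist S S' powr q \<le> (c1 + c2) * e"
proof (cases "S' = {}")
  case False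
  then obtain x' where "x' \<in> S'" by blast
  with \<open>S' \<subseteq> K\<close> have "x' \<in> K" by blast
  have "setdist S S' = setdist S' S" by (rule setdist_sym)
  also have "\<dots> \<le> setdist {x'} S" using \<open>x' \<in> S'\<close> by (intro setdist_subset_left) auto
  also have "\<dots> = infdist x' S" by (simp add: infdist_eq_setdist)
  finally have "setdist S S' powr q \<le> infdist x' S powr q"
    using \<open>0 < q\<close> by (intro powr_mono2) auto
  also have "\<dots> \<le> c1 * \<bar>f x'\<bar> + c2 * norm (g x')"
    using error_bound[rule_format, of x'] \<open>x' \<in> K\<close> by (simp add: closest_point_self)
  also have "\<dots> \<le> c1 * e + c2 * e"
    using small[OF \<open>x' \<in> S'\<close>] \<open>0 \<le> c1\<close> \<open>0 \<le> c2\<close> by (intro add_mono mult_left_mono) auto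
  finally show ?thesis by (simp add: algebra_simps)
qed (use assms in simp)

locale slater_conic_program =
  fixes K :: "'e::euclidean_space set" and A :: "'e \<Rightarrow> 'f::euclidean_space"
    and b :: 'f and c :: 'e and x0 :: 'e and r :: real and y0 :: 'f and \<rho> :: real
    and R :: "'f \<Rightarrow> 'e" and B :: real
  assumes convex_K: "convex K" and linear_A: "linear A"
    and primal_ball: "cball x0 r \<subseteq> K" and r_pos: "0 < r" and A_x0: "A x0 = b"
    and dual_ball: "cball (c - adjoint A y0) \<rho> \<subseteq> dual_cone K" and \<rho>_pos: "0 < \<rho>"
    and linear_R: "linear R" and A_R: "\<And>y. A (R y) = y"
    and R_bound: "\<And>y. norm (R y) \<le> B * norm y" and B_pos: "0 < B"
begin

lemma objective_split: "inner c x = inner y0 (A x) + inner (c - adjoint A y0) x"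
proof -
  have "inner (adjoint A y0) x = inner y0 (A x)"
    using adjoint_works[OF linear_A, of x y0] by (simp add: inner_commute)
  then show ?thesis by (simp add: inner_diff_left)
qed

lemma objective_coercive:
  assumes "x \<in> K" shows "inner y0 (A x) + \<rho> * norm x \<le> inner c x"
  using dual_cone_cball_coercive[OF dual_ball _ assms] \<rho>_pos objective_split[of x] by simp

lemma x0_feasible: "x0 \<in> feasible_set A b K"
  using primal_ball r_pos A_x0 by (auto simp: feasible_set_def)

lemma opt_val_le:
  assumes "x \<in> feasible_set A b K" shows "opt_val A b c K \<le> inner c x"
proof -
  have "bdd_below ((\<lambda>x. inner c x) ` feasible_set A b K)"
  proof (rule bdd_belowI2)
    fix x assume "x \<in> feasible_set A b K"
    moreover have "0 \<le> \<rho> * norm x" using \<rho>_pos by simp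
    ultimately show "inner y0 b \<le> inner c x"
      using objective_coercive[of x] by (simp add: feasible_set_def)
  qed
  then show ?thesis unfolding opt_val_def using assms by (rule cINF_lower)
qed

definition level_radius :: real where
  "level_radius = (inner c x0 - inner y0 b) / \<rho>"

lemma norm_x0_le_level_radius: "norm x0 \<le> level_radius"
  using objective_coercive[of x0] x0_feasible \<rho>_pos
  by (auto simp: level_radius_def feasible_set_def field_simps)

lemma level_radius_nonneg: "0 \<le> level_radius"
  using norm_x0_le_level_radius norm_ge_zero[of x0] by linarith

text \<open>Points of the feasible set that are no worse than \<open>x0\<close> lie in the ball of radius
  \<open>level_radius\<close>, so the optimal value is an infimum over this ball.\<close>
lemma le_opt_val:
  assumes bound: "\<And>x. x \<in> feasible_set A b K \<Longrightarrow> norm x \<le> level_radius \<Longrightarrow> q \<le> inner c x"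
  shows "q \<le> opt_val A b c K"
  unfolding opt_val_def
proof (rule cINF_greatest)
  show "feasible_set A b K \<noteq> {}" using x0_feasible by blast
  fix x assume x: "x \<in> feasible_set A b K"
  show "q \<le> inner c x"
  proof (cases "inner c x \<le> inner c x0")
    case True
    then have "norm x \<le> level_radius"
      using objective_coercive[of x] x \<rho>_pos
      by (auto simp: level_radius_def feasible_set_def field_simps)
    with x show ?thesis by (rule bound)
  next
    case False
    then show ?thesis
      using bound[OF x0_feasible norm_x0_le_level_radius] by linarith
  qed
qed

definition restoration_const :: real where
  "restoration_const = 2 * B * (1 + level_radius) * (2 * level_radius + r) / r"

definition sol_radius :: real where
  "sol_radius = 2 * ((norm c + 1) * (level_radius + restoration_const) + norm y0 * (norm b + 1)) / \<rho>"

lemma restoration_const_nonneg: "0 \<le> restoration_const"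
  using B_pos r_pos level_radius_nonneg by (simp add: restoration_const_def)

lemma sol_radius_nonneg: "0 \<le> sol_radius"
  using \<rho>_pos level_radius_nonneg restoration_const_nonneg by (simp add: sol_radius_def)

end

locale small_perturbation = slater_conic_program K A b c x0 r y0 \<rho> R B
  for K :: "'e::euclidean_space set" and A :: "'e \<Rightarrow> 'f::euclidean_space"
    and b c x0 r y0 \<rho> R B +
  fixes dA :: "'e \<Rightarrow> 'f" and db :: 'f and dc :: 'e and \<delta> :: real
  assumes linear_dA: "linear dA"
    and dA_le: "onorm dA \<le> \<delta>" and db_le: "norm db \<le> \<delta>" and dc_le: "norm dc \<le> \<delta>"
    and \<delta>_le_1: "\<delta> \<le> 1"
    and \<delta>_le_B: "2 * B * \<delta> \<le> 1"
    and \<delta>_le_level: "2 * B * (1 + level_radius) * \<delta> \<le> r"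
    and \<delta>_le_\<rho>: "2 * (norm y0 + 1) * \<delta> \<le> \<rho>"
    and \<delta>_le_sol: "B * (1 + sol_radius) * \<delta> \<le> r"
begin

lemma dA_bound: "norm (dA x) \<le> \<delta> * norm x"
  using onorm[of dA x] linear_dA dA_le
  by (metis linear_conv_bounded_linear mult_right_mono norm_ge_zero order_trans)

lemma \<delta>_nonneg: "0 \<le> \<delta>"
  using db_le norm_ge_zero[of db] by linarith

lemma linear_perturbed: "linear (\<lambda>x. A x + dA x)"
  using linear_A linear_dA by (rule linear_compose_add)

lemma perturbed_solvable: "\<exists>d. A d + dA d = y \<and> norm d \<le> 2 * B * norm y"
proof (rule right_inverse_perturbation_solvable[OF linear_R A_R R_bound _ linear_dA])
  show "0 \<le> B" using B_pos by simp
  have "onorm dA * B \<le> B * \<delta>"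
    using dA_le B_pos by (simp add: mult_right_mono mult.commute)
  then show "onorm dA * B \<le> 1 / 2"
    using \<delta>_le_B by linarith
qed

lemma perturbed_feasible_near:
  assumes x: "x \<in> feasible_set A b K" and x_le: "norm x \<le> level_radius"
  shows "\<exists>z \<in> feasible_set (\<lambda>x. A x + dA x) (b + db) K. norm (z - x) \<le> restoration_const * \<delta>"
proof -
  define t where "t = 2 * B * (1 + level_radius) * \<delta> / r"
  have "0 \<le> t" "t \<le> 1"
    using B_pos r_pos \<delta>_nonneg level_radius_nonneg \<delta>_le_level by (simp_all add: t_def)
  define w where "w = (1 - t) *\<^sub>R x + t *\<^sub>R x0"
  have "A x = b" using x by (simp add: feasible_set_def)
  then have "A w = b"
    unfolding w_def linear_add[OF linear_A] linear_cmul[OF linear_A] A_x0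
    by (simp add: algebra_simps)
  have "norm w \<le> (1 - t) * norm x + t * norm x0"
    using norm_triangle_ineq[of "(1 - t) *\<^sub>R x" "t *\<^sub>R x0"] \<open>0 \<le> t\<close> \<open>t \<le> 1\<close>
    by (simp add: w_def)
  also have "\<dots> \<le> (1 - t) * level_radius + t * level_radius"
    using x_le norm_x0_le_level_radius \<open>0 \<le> t\<close> \<open>t \<le> 1\<close>
    by (intro add_mono mult_left_mono) auto
  finally have w_le: "norm w \<le> level_radius" by (simp add: algebra_simps)
  have "norm (b + db - (A w + dA w)) \<le> norm db + norm (dA w)"
    using \<open>A w = b\<close> norm_triangle_ineq4[of db "dA w"] by simp
  also have "\<dots> \<le> (1 + level_radius) * \<delta>"
    using db_le dA_bound[of w] mult_left_mono[OF w_le \<delta>_nonneg]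
    by (simp add: algebra_simps)
  finally have "2 * B * norm (b + db - (A w + dA w)) \<le> t * r"
    using B_pos r_pos by (simp add: t_def)
  then obtain z where z: "z \<in> K" "A z + dA z = b + db"
    and z_near: "norm (z - x) \<le> t * (norm x + norm x0 + r)"
    using feasibility_restoration[OF convex_K primal_ball _ linear_perturbed perturbed_solvable
        \<open>0 \<le> t\<close> \<open>t \<le> 1\<close>] x
    by (fastforce simp: w_def feasible_set_def)
  note z_near
  also have "\<dots> \<le> t * (2 * level_radius + r)"
    using x_le norm_x0_le_level_radius \<open>0 \<le> t\<close> by (intro mult_left_mono) auto
  also have "\<dots> = restoration_const * \<delta>"
    using r_pos by (simp add: t_def restoration_const_def)
  finally show ?thesis
    using z by (auto simp: feasible_set_def)
qed

lemma perturbed_objective_coercive: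
  assumes x: "x \<in> feasible_set (\<lambda>x. A x + dA x) (b + db) K"
  shows "\<rho> / 2 * norm x - norm y0 * (norm b + 1) \<le> inner (c + dc) x"
proof -
  have "A x = b + db - dA x" using x by (simp add: feasible_set_def algebra_simps)
  then have split: "inner (c + dc) x \<ge> inner y0 b + inner y0 db - inner y0 (dA x) + \<rho> * norm x + inner dc x"
    using objective_coercive[of x] x
    by (simp add: feasible_set_def inner_add_left inner_add_right inner_diff_right)
  have "- (norm y0 * norm b) \<le> inner y0 b"
    using Cauchy_Schwarz_ineq2[of y0 b] by linarith
  moreover have "- norm y0 \<le> inner y0 db"
    using Cauchy_Schwarz_ineq2[of y0 db] mult_left_mono[OF order_trans[OF db_le \<delta>_le_1], of "norm y0"]
    by simp
  moreover have "inner y0 (dA x) \<le> norm y0 * (\<delta> * norm x)"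
    using Cauchy_Schwarz_ineq2[of y0 "dA x"] mult_left_mono[OF dA_bound, of "norm y0" x] by simp
  moreover have "- (\<delta> * norm x) \<le> inner dc x"
    using Cauchy_Schwarz_ineq2[of dc x] mult_right_mono[OF dc_le, of "norm x"] by simp
  moreover have "norm y0 * (\<delta> * norm x) + \<delta> * norm x \<le> \<rho> / 2 * norm x"
    using mult_right_mono[OF \<delta>_le_\<rho>, of "norm x"] by (simp add: algebra_simps)
  ultimately show ?thesis
    using split by (simp add: algebra_simps)
qed

lemma perturbed_solution_norm_le:
  assumes x': "x' \<in> sol_set (\<lambda>x. A x + dA x) (b + db) (c + dc) K"
  shows "norm x' \<le> sol_radius"
proof -
  obtain z0 where z0: "z0 \<in> feasible_set (\<lambda>x. A x + dA x) (b + db) K"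
    and "norm (z0 - x0) \<le> restoration_const * \<delta>"
    using perturbed_feasible_near[OF x0_feasible norm_x0_le_level_radius] by blast
  moreover have "restoration_const * \<delta> \<le> restoration_const"
    using restoration_const_nonneg \<delta>_le_1 by (simp add: mult_left_le)
  ultimately have "norm z0 \<le> level_radius + restoration_const"
    using norm_x0_le_level_radius norm_triangle_ineq2[of z0 x0] by linarith
  have "inner (c + dc) x' \<le> inner (c + dc) z0"
    using x' z0 by (simp add: sol_set_def)
  also have "\<dots> \<le> norm (c + dc) * norm z0"
    using Cauchy_Schwarz_ineq2[of "c + dc" z0] by linarith
  also have "\<dots> \<le> (norm c + 1) * (level_radius + restoration_const)"
    using \<open>norm z0 \<le> level_radius + restoration_const\<close> norm_triangle_ineq[of c dc] dc_le \<delta>_le_1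
    by (intro mult_mono) auto
  finally have "\<rho> / 2 * norm x' \<le> (norm c + 1) * (level_radius + restoration_const) + norm y0 * (norm b + 1)"
    using perturbed_objective_coercive[of x'] x' by (simp add: sol_set_def)
  then show ?thesis
    using \<rho>_pos by (simp add: sol_radius_def field_simps)
qed

lemma residual_le:
  assumes x': "x' \<in> sol_set (\<lambda>x. A x + dA x) (b + db) (c + dc) K"
  shows "norm (A x' - b) \<le> (1 + sol_radius) * \<delta>"
proof -
  have "A x' - b = db - dA x'" using x' by (simp add: sol_set_def feasible_set_def algebra_simps)
  then have "norm (A x' - b) \<le> \<delta> + \<delta> * norm x'"
    using norm_triangle_ineq4[of db "dA x'"] db_le dA_bound[of x'] by simp
  also have "\<dots> \<le> \<delta> + \<delta> * sol_radius"
    using perturbed_solution_norm_le[OF x'] \<delta>_nonneg by (simp add: mult_left_mono)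
  finally show ?thesis by (simp add: algebra_simps)
qed

lemma opt_val_minus_objective_le:
  assumes x': "x' \<in> sol_set (\<lambda>x. A x + dA x) (b + db) (c + dc) K"
  shows "opt_val A b c K - inner c x'
    \<le> norm c * (B * (1 + sol_radius) / r) * (sol_radius + level_radius + r) * \<delta>"
proof -
  define t where "t = B * norm (A x' - b) / r"
  have Bt: "B * norm (A x' - b) \<le> B * (1 + sol_radius) * \<delta>"
    using mult_left_mono[OF residual_le[OF x'], of B] B_pos by (simp add: mult.assoc)
  have "0 \<le> t" using B_pos r_pos by (simp add: t_def)
  have "t \<le> 1" using Bt \<delta>_le_sol r_pos by (simp add: t_def)
  have "x' \<in> K" using x' by (simp add: sol_set_def feasible_set_def)
  have "b - A ((1 - t) *\<^sub>R x' + t *\<^sub>R x0) = (1 - t) *\<^sub>R (b - A x')"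
    unfolding linear_add[OF linear_A] linear_cmul[OF linear_A] A_x0 by (simp add: algebra_simps)
  then have "B * norm (b - A ((1 - t) *\<^sub>R x' + t *\<^sub>R x0)) \<le> t * r"
    using \<open>0 \<le> t\<close> \<open>t \<le> 1\<close> B_pos r_pos
    by (simp add: t_def norm_minus_commute mult_left_le_one_le)
  then obtain z where "z \<in> K" "A z = b" and z_near: "norm (z - x') \<le> t * (norm x' + norm x0 + r)"
    using feasibility_restoration[OF convex_K primal_ball \<open>x' \<in> K\<close> linear_A _ \<open>0 \<le> t\<close> \<open>t \<le> 1\<close>]
      A_R R_bound by blast
  have "opt_val A b c K \<le> inner c x' + inner c (z - x')"
    using opt_val_le[of z] \<open>z \<in> K\<close> \<open>A z = b\<close> by (simp add: feasible_set_def inner_diff_right)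
  also have "inner c (z - x') \<le> norm c * (t * (sol_radius + level_radius + r))"
    using Cauchy_Schwarz_ineq2[of c "z - x'"] z_near perturbed_solution_norm_le[OF x']
      norm_x0_le_level_radius \<open>0 \<le> t\<close>
    by (smt (verit) mult_left_mono norm_ge_zero)
  also have "t \<le> B * (1 + sol_radius) * \<delta> / r"
    using Bt r_pos by (simp add: t_def divide_right_mono)
  finally show ?thesis
    using sol_radius_nonneg level_radius_nonneg r_pos
    by (simp add: mult_left_mono mult_right_mono mult_ac)
qed

lemma objective_minus_opt_val_le:
  assumes x': "x' \<in> sol_set (\<lambda>x. A x + dA x) (b + db) (c + dc) K"
  shows "inner c x' - opt_val A b c K
    \<le> (norm c * restoration_const + level_radius + restoration_const + sol_radius) * \<delta>"
proof -
  have "inner c x' - (norm c * restoration_const + level_radius + restoration_const + sol_radius) * \<delta> \<le> inner c x"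
    if x: "x \<in> feasible_set A b K" and x_le: "norm x \<le> level_radius" for x
  proof -
    obtain z where z: "z \<in> feasible_set (\<lambda>x. A x + dA x) (b + db) K"
      and z_near: "norm (z - x) \<le> restoration_const * \<delta>"
      using perturbed_feasible_near[OF x x_le] by blast
    have "restoration_const * \<delta> \<le> restoration_const"
      using restoration_const_nonneg \<delta>_le_1 by (simp add: mult_left_le)
    with z_near x_le have z_le: "norm z \<le> level_radius + restoration_const"
      using norm_triangle_ineq2[of z x] by linarith
    have "inner c x' + inner dc x' \<le> inner c z + inner dc z"
      using x' z by (simp add: sol_set_def inner_add_left)
    moreover have "inner c z \<le> inner c x + norm c * (restoration_const * \<delta>)"
      using Cauchy_Schwarz_ineq2[of c "z - x"] mult_left_mono[OF z_near norm_ge_zero[of c]]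
      by (simp add: inner_diff_right)
    moreover have "inner dc z \<le> (level_radius + restoration_const) * \<delta>"
      using Cauchy_Schwarz_ineq2[of dc z] dc_le z_le
      by (smt (verit) mult.commute mult_mono norm_ge_zero)
    moreover have "- inner dc x' \<le> sol_radius * \<delta>"
      using Cauchy_Schwarz_ineq2[of dc x'] dc_le perturbed_solution_norm_le[OF x']
      by (smt (verit) mult.commute mult_mono norm_ge_zero)
    ultimately show ?thesis by (simp add: algebra_simps)
  qed
  then show ?thesis
    using le_opt_val by fastforce
qed

end

lemma (in slater_conic_program) perturbed_solution_error:
  "\<exists>\<epsilon>0>0. \<exists>C\<ge>0. \<forall>dA db dc x'. linear dA \<longrightarrow> onorm dA + norm db + norm dc \<le> \<epsilon>0 \<longrightarrow>
     x' \<in> sol_set (\<lambda>x. A x + dA x) (b + db) (c + dc) K \<longrightarrow>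
     \<bar>inner c x' - opt_val A b c K\<bar> \<le> C * (onorm dA + norm db + norm dc) \<and>
     norm (A x' - b) \<le> C * (onorm dA + norm db + norm dc)"
proof -
  define \<epsilon>0 where "\<epsilon>0 = Min {1, 1 / (2 * B), r / (2 * B * (1 + level_radius)),
    \<rho> / (2 * (norm y0 + 1)), r / (B * (1 + sol_radius))}"
  define C_low where "C_low = norm c * (B * (1 + sol_radius) / r) * (sol_radius + level_radius + r)"
  define C_up where "C_up = norm c * restoration_const + level_radius + restoration_const + sol_radius"
  define C where "C = max (1 + sol_radius) (max C_low C_up)"
  have pos: "0 < 2 * B" "0 < 2 * B * (1 + level_radius)" "0 < 2 * (norm y0 + 1)"
    "0 < B * (1 + sol_radius)"
    using B_pos level_radius_nonneg sol_radius_nonneg by (simp_all add: add_nonneg_pos add_pos_nonneg)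
  then have "0 < \<epsilon>0"
    using r_pos \<rho>_pos unfolding \<epsilon>0_def by auto
  moreover have "0 \<le> C"
    using sol_radius_nonneg by (simp add: C_def le_max_iff_disj)
  moreover have "\<bar>inner c x' - opt_val A b c K\<bar> \<le> C * (onorm dA + norm db + norm dc)
      \<and> norm (A x' - b) \<le> C * (onorm dA + norm db + norm dc)"
    if "linear dA" and small: "onorm dA + norm db + norm dc \<le> \<epsilon>0"
      and x': "x' \<in> sol_set (\<lambda>x. A x + dA x) (b + db) (c + dc) K" for dA db dc x'
  proof -
    define \<delta> where "\<delta> = onorm dA + norm db + norm dc"
    have "\<delta> \<le> 1" "\<delta> \<le> 1 / (2 * B)" "\<delta> \<le> r / (2 * B * (1 + level_radius))"
      "\<delta> \<le> \<rho> / (2 * (norm y0 + 1))" "\<delta> \<le> r / (B * (1 + sol_radius))"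
      using small unfolding \<delta>_def[symmetric] \<epsilon>0_def by auto
    then have "\<delta> \<le> 1" "2 * B * \<delta> \<le> 1" "2 * B * (1 + level_radius) * \<delta> \<le> r"
      "2 * (norm y0 + 1) * \<delta> \<le> \<rho>" "B * (1 + sol_radius) * \<delta> \<le> r"
      using pos by (simp_all only: pos_le_divide_eq mult.commute)
    moreover have "onorm dA \<le> \<delta>" "norm db \<le> \<delta>" "norm dc \<le> \<delta>"
      using onorm_pos_le[of dA] \<open>linear dA\<close> by (auto simp: \<delta>_def linear_conv_bounded_linear)
    ultimately interpret small_perturbation K A b c x0 r y0 \<rho> R B dA db dc \<delta>
      using \<open>linear dA\<close>
      by (intro small_perturbation.intro[OF slater_conic_program_axioms]
          small_perturbation_axioms.intro)
    have "C_low * \<delta> \<le> C * \<delta>" "C_up * \<delta> \<le> C * \<delta>" "(1 + sol_radius) * \<delta> \<le> C * \<delta>"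
      using \<delta>_nonneg by (simp_all add: C_def mult_right_mono)
    then show ?thesis
      using opt_val_minus_objective_le[OF x'] objective_minus_opt_val_le[OF x'] residual_le[OF x']
      unfolding C_low_def C_up_def \<delta>_def[symmetric] by linarith
  qed
  ultimately show ?thesis
    by (intro exI[of _ \<epsilon>0] exI[of _ C] conjI allI impI) auto
qed

lemma slater_conic_program_exists:
  fixes K :: "'e::euclidean_space set" and A :: "'e \<Rightarrow> 'f::euclidean_space"
  assumes "proper_cone K" and "linear A" "surj A"
    and "\<exists>x0 \<in> interior K. A x0 = b" and "\<exists>y0. c - adjoint A y0 \<in> interior (dual_cone K)"
  shows "\<exists>x0 r y0 \<rho> R B. slater_conic_program K A b c x0 r y0 \<rho> R B"
proof -
  obtain x0 r where "cball x0 r \<subseteq> K" "0 < r" "A x0 = b"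
    using assms(4) mem_interior_cball by blast
  moreover obtain y0 \<rho> where "cball (c - adjoint A y0) \<rho> \<subseteq> dual_cone K" "0 < \<rho>"
    using assms(5) mem_interior_cball by blast
  moreover obtain R where "linear R" "A \<circ> R = id"
    using linear_surjective_right_inverse assms(2,3) by blast
  moreover obtain B where "0 < B" "\<And>y. norm (R y) \<le> B * norm y"
    using linear_bounded_pos[OF \<open>linear R\<close>] by blast
  moreover have "convex K"
    using assms(1) by (simp add: proper_cone_def convex_cone_def)
  ultimately have "slater_conic_program K A b c x0 r y0 \<rho> R B"
    using \<open>linear A\<close> by (intro slater_conic_program.intro) (simp_all add: pointfree_idE)
  then show ?thesis by blast
qed

theorem theorem2:
  fixes K :: "'e::euclidean_space set"
    and A :: "'e \<Rightarrow> 'f::euclidean_space"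
    and b :: 'f and c :: 'e
  assumes K: "proper_cone K"
    and A: "linear A" "surj A"
    and primal_slater: "\<exists>x0 \<in> interior K. A x0 = b"
    and dual_slater: "\<exists>y0. c - adjoint A y0 \<in> interior (dual_cone K)"
  shows "\<exists>\<epsilon>0>0. \<forall>\<epsilon>. 0 < \<epsilon> \<and> \<epsilon> \<le> \<epsilon>0 \<longrightarrow>
    (\<exists>cbar. \<forall>dA db dc. linear dA \<and> onorm dA + norm db + norm dc \<le> \<epsilon> \<longrightarrow>
       (\<forall>x' \<in> sol_set (\<lambda>x. A x + dA x) (b + db) (c + dc) K.
          max (inner c x' - opt_val A b c K) (norm (A x' - b))
            \<le> cbar * (onorm dA + norm db + norm dc)))
    \<and> (\<forall>c1 c2 c3 p. c1 \<ge> 0 \<and> c2 \<ge> 0 \<and> c3 \<ge> 0 \<and> p > 0 \<and>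
         (\<forall>x. infdist x (sol_set A b c K) powr p
               \<le> c1 * \<bar>inner c x - opt_val A b c K\<bar> + c2 * norm (A x - b)
                 + c3 * norm (x - closest_point K x))
       \<longrightarrow> (\<exists>c1' c2' c3'. c1' \<ge> 0 \<and> c2' \<ge> 0 \<and> c3' \<ge> 0 \<and>
             (\<forall>dA db dc. linear dA \<and> onorm dA + norm db + norm dc \<le> \<epsilon> \<longrightarrow>
                setdist (sol_set A b c K) (sol_set (\<lambda>x. A x + dA x) (b + db) (c + dc) K) powr p
                  \<le> c1' * norm dc + c2' * onorm dA + c3' * norm db)))"
proof -
  obtain x0 r y0 \<rho> R B where "slater_conic_program K A b c x0 r y0 \<rho> R B"
    using slater_conic_program_exists[OF assms] by blast
  then interpret slater_conic_program K A b c x0 r y0 \<rho> R B .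
  obtain \<epsilon>0 C where "0 < \<epsilon>0" "0 \<le> C" and error: "\<And>dA db dc x'. linear dA \<Longrightarrow>
      onorm dA + norm db + norm dc \<le> \<epsilon>0 \<Longrightarrow> x' \<in> sol_set (\<lambda>x. A x + dA x) (b + db) (c + dc) K \<Longrightarrow>
      \<bar>inner c x' - opt_val A b c K\<bar> \<le> C * (onorm dA + norm db + norm dc) \<and>
      norm (A x' - b) \<le> C * (onorm dA + norm db + norm dc)"
    using perturbed_solution_error by blast
  have transfer: "setdist (sol_set A b c K) (sol_set (\<lambda>x. A x + dA x) (b + db) (c + dc) K) powr q
      \<le> (c1 + c2) * C * norm dc + (c1 + c2) * C * onorm dA + (c1 + c2) * C * norm db"
    if "linear dA" "onorm dA + norm db + norm dc \<le> \<epsilon>0" "0 < q" "0 \<le> c1" "0 \<le> c2"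
      and "\<forall>x. infdist x (sol_set A b c K) powr q \<le> c1 * \<bar>inner c x - opt_val A b c K\<bar>
        + c2 * norm (A x - b) + c3 * norm (x - closest_point K x)"
    for dA db dc c1 c2 c3 q
  proof -
    have "0 \<le> C * (onorm dA + norm db + norm dc)"
      using \<open>0 \<le> C\<close> onorm_pos_le[of dA] \<open>linear dA\<close> by (simp add: linear_conv_bounded_linear)
    moreover have "sol_set (\<lambda>x. A x + dA x) (b + db) (c + dc) K \<subseteq> K"
      by (auto simp: sol_set_def feasible_set_def)
    ultimately have "setdist (sol_set A b c K) (sol_set (\<lambda>x. A x + dA x) (b + db) (c + dc) K) powr q
        \<le> (c1 + c2) * (C * (onorm dA + norm db + norm dc))"
      by (rule error_bound_transfer[OF that(3-5) _ _ that(6) error[OF that(1,2)]])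
    then show ?thesis by (simp add: algebra_simps)
  qed
  show ?thesis
    apply (rule exI[of _ \<epsilon>0], intro conjI allI impI \<open>0 < \<epsilon>0\<close>)
     apply (rule exI[of _ C], intro allI impI ballI)
    subgoal for \<epsilon> dA db dc x'
      using error[of dA db dc x'] by (auto simp: abs_le_iff)
    subgoal for \<epsilon> c1 c2 c3 q
      apply (rule exI[of _ "(c1 + c2) * C"])+
      using transfer[of _ _ _ q c1 c2 c3] \<open>0 \<le> C\<close> by auto
    done
qed

end
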